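(* Assume $\varphi$ has a bounded density with respect to the spherical Lebesgue measure on $\mathbb{S}^{d-1}$. Then there exists a constant $C_\varphi$, depending only on $\varphi$, such that for every increasing function $f:[0,\infty)\to[0,\infty)$, \[ \int_{\mathsf{P}} f\big(\Phi(T(u_{0:d}))\big)\,d\varphi^{d+1}(u_{0:d})\le C_\varphi\int_1^\infty f(t)\,\frac{1}{t^2}\,dt . \]
   Context: Let $d\ge2$ and let $\varphi$ be an even Borel probability measure on $\mathbb{S}^{d-1}$ whose support is not contained in a great subsphere. For a convex body $K$, $\Phi(K)=\int_{\mathbb{S}^{d-1}}h(K,u)\,d\varphi(u)$ with $h(K,u)=\max_{x\in K}\langle x,u\rangle$. For $u\in\mathbb{S}^{d-1}$ put $H(u,1)^-=\{x\in\mathbb{R}^d:\langle x,u\rangle\le 1\}$. Write $u_{0:d}=(u_0,\dots,u_d)\in(\mathbb{S}^{d-1})^{d+1}$; $\mathsf{P}$ is the set of such tuples with $u_0,\dots,u_d$ not all contained in one closed half sphere, and $T(u_{0:d})=\bigcap_{i=0}^dH(u_i,1)^-$. *)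

theory Defs
  imports "HOL-Probability.Probability"
begin

text \<open>Spherical Lebesgue (surface area) measure on the unit sphere of 'a, realised on the
  Borel sets of 'a: sigma(A) = DIM('a) * vol({t x | 0 \<le> t \<le> 1, x \<in> A \<inter> S}),
  i.e. DIM('a) times the pushforward of Lebesgue measure on the unit ball under x \<mapsto> x/|x|.\<close>
definition sphere_lebesgue :: "'a::euclidean_space measure" where
  "sphere_lebesgue =
     density (distr (density lborel (indicator (ball 0 1))) borel (\<lambda>x. x /\<^sub>R norm x))
             (\<lambda>_. ennreal (real DIM('a)))"

definition measure_support :: "'a::metric_space measure \<Rightarrow> 'a set" where
  "measure_support M = {x. \<forall>e>0. emeasure M (ball x e) > 0}"

definition great_subsphere :: "'a::euclidean_space \<Rightarrow> 'a set" where
  "great_subsphere v = {x \<in> sphere 0 1. x \<bullet> v = 0}"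

definition supp_fun :: "'a::euclidean_space set \<Rightarrow> 'a \<Rightarrow> real" where
  "supp_fun K u = Sup ((\<lambda>x. x \<bullet> u) ` K)"

definition Phi_fun :: "'a::euclidean_space measure \<Rightarrow> 'a set \<Rightarrow> real" where
  "Phi_fun \<phi> K = (\<integral>u. supp_fun K u \<partial>\<phi>)"

definition halfspace1 :: "'a::euclidean_space \<Rightarrow> 'a set" where
  "halfspace1 u = {x. x \<bullet> u \<le> 1}"

definition T_poly :: "(nat \<Rightarrow> 'a::euclidean_space) \<Rightarrow> 'a set" where
  "T_poly u = (\<Inter>i\<in>{0..DIM('a)}. halfspace1 (u i))"

definition P_set :: "(nat \<Rightarrow> 'a::euclidean_space) set" where
  "P_set = {u \<in> PiE {0..DIM('a)} (\<lambda>_. sphere 0 1).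
              \<not> (\<exists>v\<in>sphere 0 1. \<forall>i\<in>{0..DIM('a)}. 0 \<le> u i \<bullet> v)}"

end

theory Submission
  imports Defs
begin

text \<open>Since \<open>\<phi>\<close> lives on the unit sphere, \<open>\<Phi>(T)\<close> is at most the largest norm of a point
  of the polytope \<open>T\<close>. If that exceeds \<open>t\<close>, the farthest point \<open>z\<close> of \<open>T\<close> is cut out by \<open>d\<close>
  linearly independent active normals, \<open>\<langle>u_k, z\<rangle> = 1\<close>. Expanding \<open>z / |z|^2\<close> in this basis, the
  coefficients sum to \<open>1\<close>, so one of them has modulus at least \<open>1/d\<close>, and the corresponding
  normal lies within \<open>d/t\<close> of the span of \<open>d - 1\<close> other normals. Conditioned on those, a vector
  with bounded density must then fall into a slab of width \<open>O(1/t)\<close>, which has probability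
  \<open>O(1/t)\<close>. Hence \<open>\<Phi>(T) > 2^k\<close> has probability \<open>O(2^-k)\<close>, and summing \<open>f\<close> over dyadic
  shells bounds the integral by a multiple of the integral of \<open>f(t)/t^2\<close> over \<open>[1, \<infinity>)\<close>.\<close>


lemma sets_sphere_lebesgue [simp]:
  "sets (sphere_lebesgue :: 'a::euclidean_space measure) = sets borel"
  unfolding sphere_lebesgue_def by simp

lemma AE_sphere_lebesgue_norm_le_1:
  "AE x in (sphere_lebesgue :: 'a::euclidean_space measure). norm x \<le> 1"
proof -
  have "norm (x /\<^sub>R norm x) \<le> 1" for x :: 'a
    by (cases "x = 0") simp_all
  then have "AE x in distr (density lborel (indicator (ball (0::'a) 1))) borel (\<lambda>x. x /\<^sub>R norm x).
          norm x \<le> 1"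
    by (subst AE_distr_iff) (auto intro!: AE_I2)
  then show ?thesis
    unfolding sphere_lebesgue_def by (subst AE_density) (auto elim: eventually_mono)
qed

lemma AE_density_sphere_lebesgue_norm_le_1:
  assumes "g \<in> borel_measurable borel"
  shows "AE x in density (sphere_lebesgue :: 'a::euclidean_space measure) g. norm x \<le> 1"
proof -
  have "g \<in> borel_measurable sphere_lebesgue"
    by (subst measurable_cong_sets[OF sets_sphere_lebesgue refl]) (rule assms)
  then show ?thesis
    using AE_sphere_lebesgue_norm_le_1 by (subst AE_density) (auto elim: eventually_mono)
qed

lemma emeasure_slab_packing:
  fixes n :: "'a::euclidean_space"
  assumes n: "norm n = 1" and \<delta>: "\<delta> > 0" and N: "3 * \<delta> * real N \<le> 1"
  shows "of_nat N * emeasure lborel {y \<in> ball (0::'a) 1. \<bar>y \<bullet> n\<bar> \<le> \<delta>}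
           \<le> emeasure lborel (ball (0::'a) 2)"
proof -
  define S where "S = {y \<in> ball (0::'a) 1. \<bar>y \<bullet> n\<bar> \<le> \<delta>}"
  define c where "c k = (3 * real k * \<delta>) *\<^sub>R n" for k :: nat
  define T where "T k = (+) (- c k) -` S" for k
  have S_sets [measurable]: "S \<in> sets lborel" unfolding S_def by measurable
  have T_sets: "T k \<in> sets lborel" for k
  proof -
    have "(+) (- c k) -` S \<inter> space lborel \<in> sets lborel"
      by (rule measurable_sets[OF _ S_sets]) simp
    then show ?thesis by (simp add: T_def)
  qed
  have emeasure_T: "emeasure lborel (T k) = emeasure lborel S" for k
    using emeasure_distr[of "(+) (- c k)" lborel borel S] S_sets
    by (simp add: lborel_distr_plus T_def)
  have c_inner: "c k \<bullet> n = 3 * real k * \<delta>" for k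
    using n by (simp add: c_def dot_square_norm)
  have "disjoint_family_on T {..<N}"
    unfolding disjoint_family_on_def
  proof (intro ballI impI)
    fix k l :: nat assume "k \<noteq> l"
    have "\<bar>real k - real l\<bar> \<ge> 1" using \<open>k \<noteq> l\<close> by linarith
    then have "3 * \<delta> \<le> 3 * \<delta> * \<bar>real k - real l\<bar>"
      using \<delta> mult_left_mono[of 1 "\<bar>real k - real l\<bar>" "3 * \<delta>"] by simp
    also have "\<dots> = \<bar>3 * \<delta> * (real k - real l)\<bar>"
      using \<delta> by (simp add: abs_mult)
    also have "\<dots> = \<bar>c k \<bullet> n - c l \<bullet> n\<bar>"
      by (simp add: c_inner algebra_simps)
    finally have far: "3 * \<delta> \<le> \<bar>c k \<bullet> n - c l \<bullet> n\<bar>" .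
    show "T k \<inter> T l = {}"
    proof safe
      fix y assume "y \<in> T k" "y \<in> T l"
      then have "\<bar>y \<bullet> n - c k \<bullet> n\<bar> \<le> \<delta>" "\<bar>y \<bullet> n - c l \<bullet> n\<bar> \<le> \<delta>"
        by (auto simp: T_def S_def inner_diff_left)
      then show "y \<in> {}" using far \<delta> by linarith
    qed
  qed
  moreover have "(\<Union>k<N. T k) \<subseteq> ball 0 2"
  proof clarify
    fix y k assume "k < N" "y \<in> T k"
    have "3 * \<delta> * real k \<le> 3 * \<delta> * real N"
      using \<delta> \<open>k < N\<close> by (intro mult_left_mono) auto
    moreover have "norm (c k) = 3 * \<delta> * real k"
      using n \<delta> by (simp add: c_def)
    ultimately have "norm (c k) \<le> 1"
      using N by linarith
    moreover have "norm (y - c k) < 1" using \<open>y \<in> T k\<close> by (simp add: T_def S_def)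
    ultimately show "y \<in> ball 0 2"
      using norm_triangle_ineq[of "y - c k" "c k"] by simp
  qed
  ultimately have "emeasure lborel (\<Union>k<N. T k) \<le> emeasure lborel (ball (0::'a) 2)"
    by (intro emeasure_mono) auto
  moreover have "emeasure lborel (\<Union>k<N. T k) = of_nat N * emeasure lborel S"
    using \<open>disjoint_family_on T {..<N}\<close> T_sets
    by (subst sum_emeasure[symmetric]) (auto simp: emeasure_T)
  ultimately show ?thesis by (simp add: S_def)
qed

lemma emeasure_ball_slab_le:
  fixes n :: "'a::euclidean_space"
  assumes n: "norm n = 1" and \<delta>: "\<delta> > 0"
  shows "emeasure lborel {y \<in> ball (0::'a) 1. \<bar>y \<bullet> n\<bar> \<le> \<delta>}
           \<le> ennreal (6 * \<delta>) * emeasure lborel (ball (0::'a) 2)"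
proof (cases "\<delta> > 1/6")
  case True
  have "emeasure lborel {y \<in> ball (0::'a) 1. \<bar>y \<bullet> n\<bar> \<le> \<delta>} \<le> emeasure lborel (ball (0::'a) 2)"
    by (rule emeasure_mono) auto
  also have "\<dots> \<le> ennreal (6 * \<delta>) * emeasure lborel (ball (0::'a) 2)"
    using True mult_right_mono[of 1 "ennreal (6 * \<delta>)"] by (simp add: ennreal_ge_1)
  finally show ?thesis .
next
  case False
  define N where "N = nat \<lfloor>1 / (3 * \<delta>)\<rfloor>"
  have "real N \<le> 1 / (3 * \<delta>)" "1 / (3 * \<delta>) - 1 < real N"
    using \<delta> by (auto simp: N_def)
  then have N_le: "3 * \<delta> * real N \<le> 1" and N_ge: "1 \<le> 6 * \<delta> * real N"
    using \<delta> False by (auto simp: field_simps)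
  let ?S = "emeasure lborel {y \<in> ball (0::'a) 1. \<bar>y \<bullet> n\<bar> \<le> \<delta>}"
  have "?S \<le> ennreal (6 * \<delta> * real N) * ?S"
    using N_ge mult_right_mono[of 1 "ennreal (6 * \<delta> * real N)" ?S] by (simp add: ennreal_ge_1)
  also have "\<dots> = ennreal (6 * \<delta>) * (of_nat N * ?S)"
    using \<delta> by (simp add: ennreal_mult ennreal_of_nat_eq_real_of_nat mult.assoc)
  also have "\<dots> \<le> ennreal (6 * \<delta>) * emeasure lborel (ball (0::'a) 2)"
    by (intro mult_left_mono emeasure_slab_packing[OF n \<delta> N_le]) simp
  finally show ?thesis .
qed

lemma emeasure_sphere_lebesgue_slab_le:
  fixes n :: "'a::euclidean_space"
  assumes n: "norm n = 1" and \<delta>: "\<delta> > 0"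
  shows "emeasure sphere_lebesgue {y::'a. \<bar>y \<bullet> n\<bar> < \<delta>}
           \<le> ennreal (6 * real DIM('a) * measure lborel (ball (0::'a) 2) * \<delta>)"
proof -
  let ?A = "{y::'a. \<bar>y \<bullet> n\<bar> < \<delta>}"
  have A_sets [measurable]: "?A \<in> sets borel" by measurable
  let ?V = "measure lborel (ball (0::'a) 2)"
  have "ball 0 1 \<inter> (\<lambda>x. x /\<^sub>R norm x) -` ?A \<subseteq> {y \<in> ball (0::'a) 1. \<bar>y \<bullet> n\<bar> \<le> \<delta>}"
  proof clarify
    fix y :: 'a assume y: "y \<in> ball 0 1" "\<bar>(y /\<^sub>R norm y) \<bullet> n\<bar> < \<delta>"
    have "\<bar>y \<bullet> n\<bar> = norm y * \<bar>(y /\<^sub>R norm y) \<bullet> n\<bar>"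
      by (cases "y = 0") (simp_all add: abs_mult)
    also have "\<dots> \<le> \<delta>"
      using y \<delta> mult_mono[of "norm y" 1 "\<bar>(y /\<^sub>R norm y) \<bullet> n\<bar>" \<delta>] by simp
    finally show "\<bar>y \<bullet> n\<bar> \<le> \<delta>" .
  qed
  then have "emeasure lborel (ball 0 1 \<inter> (\<lambda>x. x /\<^sub>R norm x) -` ?A)
      \<le> emeasure lborel {y \<in> ball (0::'a) 1. \<bar>y \<bullet> n\<bar> \<le> \<delta>}"
    by (intro emeasure_mono) measurable
  also have "\<dots> \<le> ennreal (6 * \<delta>) * emeasure lborel (ball (0::'a) 2)"
    by (rule emeasure_ball_slab_le[OF n \<delta>])
  also have "emeasure lborel (ball (0::'a) 2) = ennreal ?V"
    by (rule emeasure_eq_ennreal_measure) (use emeasure_bounded_finite[of "ball (0::'a) 2"] in auto)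
  finally have preimage_le: "emeasure lborel (ball 0 1 \<inter> (\<lambda>x. x /\<^sub>R norm x) -` ?A)
      \<le> ennreal (6 * \<delta>) * ennreal ?V" .
  have "emeasure sphere_lebesgue ?A
      = ennreal (real DIM('a)) * emeasure lborel (ball 0 1 \<inter> (\<lambda>x. x /\<^sub>R norm x) -` ?A)"
    unfolding sphere_lebesgue_def
    by (simp add: emeasure_density_const emeasure_distr emeasure_restricted)
  also have "\<dots> \<le> ennreal (real DIM('a)) * (ennreal (6 * \<delta>) * ennreal ?V)"
    by (intro mult_left_mono preimage_le) simp
  also have "\<dots> = ennreal (6 * real DIM('a) * ?V * \<delta>)"
    using \<delta> by (simp add: ennreal_mult'[symmetric] mult_ac)
  finally show ?thesis .
qed

lemma emeasure_bounded_density_slab_le: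
  fixes n :: "'a::euclidean_space"
  assumes g: "g \<in> borel_measurable borel" "\<And>x. 0 \<le> g x" "\<And>x. g x \<le> B"
    and n: "norm n = 1" and \<delta>: "\<delta> > 0"
  shows "emeasure (density sphere_lebesgue (\<lambda>x. ennreal (g x))) {y. \<bar>y \<bullet> n\<bar> < \<delta>}
           \<le> ennreal (6 * B * real DIM('a) * measure lborel (ball (0::'a) 2) * \<delta>)"
proof -
  let ?A = "{y::'a. \<bar>y \<bullet> n\<bar> < \<delta>}"
  have B: "0 \<le> B" using g order_trans by blast
  have g_measurable: "(\<lambda>x. ennreal (g x)) \<in> borel_measurable sphere_lebesgue"
    by (subst measurable_cong_sets[OF sets_sphere_lebesgue refl]) (use g(1) in measurable)
  have "emeasure (density sphere_lebesgue (\<lambda>x. ennreal (g x))) ?A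
      = (\<integral>\<^sup>+ x. ennreal (g x) * indicator ?A x \<partial>sphere_lebesgue)"
    using g_measurable by (subst emeasure_density) auto
  also have "\<dots> \<le> (\<integral>\<^sup>+ x. ennreal B * indicator ?A x \<partial>sphere_lebesgue)"
    using g by (intro nn_integral_mono) (auto simp: indicator_def intro: ennreal_leI)
  also have "\<dots> = ennreal B * emeasure sphere_lebesgue ?A"
    by (rule nn_integral_cmult_indicator) simp
  also have "\<dots> \<le> ennreal B * ennreal (6 * real DIM('a) * measure lborel (ball (0::'a) 2) * \<delta>)"
    by (intro mult_left_mono emeasure_sphere_lebesgue_slab_le[OF n \<delta>]) simp
  also have "\<dots> = ennreal (6 * B * real DIM('a) * measure lborel (ball (0::'a) 2) * \<delta>)"
    using B by (simp add: ennreal_mult'[symmetric] mult_ac)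
  finally show ?thesis .
qed

lemma closed_T_poly: "closed (T_poly u)"
  unfolding T_poly_def halfspace1_def
  by (intro closed_INT ballI) (simp add: closed_halfspace_component_le inner_commute closed_halfspace_le)

lemma zero_in_T_poly: "0 \<in> T_poly u"
  by (simp add: T_poly_def halfspace1_def)

lemma bounded_T_poly:
  fixes u :: "nat \<Rightarrow> 'a::euclidean_space"
  assumes u: "u \<in> P_set"
  shows "bounded (T_poly u)"
proof -
  define G where "G v = (\<Sum>i\<in>{0..DIM('a)}. max 0 (u i \<bullet> v))" for v
  have "continuous_on (sphere 0 1) G"
    unfolding G_def by (intro continuous_intros)
  then obtain v0 where v0: "v0 \<in> sphere 0 1" "\<And>v. v \<in> sphere 0 1 \<Longrightarrow> G v0 \<le> G v"
    using continuous_attains_inf[OF compact_sphere, of 0 1 G] by auto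
  have G_pos: "G v > 0" if "v \<in> sphere 0 1" for v
  proof -
    have "- v \<in> sphere 0 1" using that by simp
    then obtain i where i: "i \<in> {0..DIM('a)}" "\<not> 0 \<le> u i \<bullet> (- v)"
      using u unfolding P_set_def by blast
    then have "0 < max 0 (u i \<bullet> v)" by simp
    also have "\<dots> \<le> G v"
      unfolding G_def by (rule member_le_sum) (use i in auto)
    finally show ?thesis .
  qed
  have "norm x \<le> real (DIM('a) + 1) / G v0" if x: "x \<in> T_poly u" for x
  proof (cases "x = 0")
    case True then show ?thesis using G_pos[OF v0(1)] by simp
  next
    case False
    have "G v0 \<le> G (x /\<^sub>R norm x)" using False by (intro v0(2)) simp
    also have "\<dots> \<le> (\<Sum>i\<in>{0..DIM('a)}. 1 / norm x)"
      unfolding G_def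
    proof (rule sum_mono)
      fix i assume "i \<in> {0..DIM('a)}"
      then have "x \<bullet> u i \<le> 1" using x by (auto simp: T_poly_def halfspace1_def)
      then have "u i \<bullet> (x /\<^sub>R norm x) \<le> 1 / norm x"
        using False by (simp add: inner_commute divide_simps)
      then show "max 0 (u i \<bullet> (x /\<^sub>R norm x)) \<le> 1 / norm x" by simp
    qed
    finally have "G v0 * norm x \<le> real (DIM('a) + 1)" using False by (simp add: divide_simps)
    then show ?thesis using G_pos[OF v0(1)] by (simp add: divide_simps mult.commute)
  qed
  then show ?thesis unfolding bounded_iff by blast
qed

lemma compact_T_poly: "u \<in> P_set \<Longrightarrow> compact (T_poly u)"
  using bounded_T_poly closed_T_poly compact_eq_bounded_closed by blast

lemma farthest_point_active_normals_span:
  fixes u :: "'i \<Rightarrow> 'a::euclidean_space"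
  assumes I: "finite I" and z: "\<forall>k\<in>I. u k \<bullet> z \<le> 1"
    and farthest: "\<And>y. \<forall>k\<in>I. u k \<bullet> y \<le> 1 \<Longrightarrow> norm y \<le> norm z"
  shows "span (u ` {k\<in>I. u k \<bullet> z = 1}) = UNIV"
proof (rule ccontr)
  let ?A = "{k\<in>I. u k \<bullet> z = 1}"
  assume "span (u ` ?A) \<noteq> UNIV"
  then have "dim (u ` ?A) < DIM('a)"
    using dim_subset_UNIV[of "u ` ?A"] dim_eq_full by fastforce
  then obtain w0 where "w0 \<noteq> 0" and w0: "\<And>y. y \<in> span (u ` ?A) \<Longrightarrow> orthogonal w0 y"
    using orthogonal_to_subspace_exists by metis
  define w where "w = (if z \<bullet> w0 \<ge> 0 then w0 else - w0)"
  have "w \<noteq> 0" "z \<bullet> w \<ge> 0" using \<open>w0 \<noteq> 0\<close> by (auto simp: w_def)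
  have w_active: "u k \<bullet> w = 0" if "k \<in> ?A" for k
    using w0[of "u k"] that by (auto simp: w_def orthogonal_def inner_commute intro: span_base)
  \<comment> \<open>moving from \<open>z\<close> along \<open>w\<close> keeps the active constraints and, for a short time, the
    inactive ones, while strictly increasing the norm\<close>
  have "\<forall>\<^sub>F s in at_right 0. \<forall>k\<in>I. u k \<bullet> (z + s *\<^sub>R w) \<le> 1"
  proof (rule eventually_ball_finite[OF I], rule ballI)
    fix k assume k: "k \<in> I"
    show "\<forall>\<^sub>F s in at_right 0. u k \<bullet> (z + s *\<^sub>R w) \<le> 1"
    proof (cases "k \<in> ?A")
      case True then show ?thesis by (simp add: inner_add_right w_active)
    next
      case False
      then have "u k \<bullet> z < 1" using z k by force
      moreover have "((\<lambda>s. u k \<bullet> (z + s *\<^sub>R w)) \<longlongrightarrow> u k \<bullet> (z + 0 *\<^sub>R w)) (at_right 0)"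
        by (intro tendsto_intros)
      ultimately have "\<forall>\<^sub>F s in at_right 0. u k \<bullet> (z + s *\<^sub>R w) < 1"
        by (intro order_tendstoD(2)) auto
      then show ?thesis by (rule eventually_mono) simp
    qed
  qed
  moreover have "\<forall>\<^sub>F s in at_right (0::real). s > 0"
    by (simp add: eventually_at_right_less)
  ultimately obtain s where "s > 0" and feasible: "\<forall>k\<in>I. u k \<bullet> (z + s *\<^sub>R w) \<le> 1"
    by (metis (mono_tags, lifting) eventually_conj eventually_happens' trivial_limit_at_right_real)
  have "(norm z)\<^sup>2 < (norm z)\<^sup>2 + 2 * s * (z \<bullet> w) + s\<^sup>2 * (norm w)\<^sup>2"
    using \<open>s > 0\<close> \<open>w \<noteq> 0\<close> \<open>z \<bullet> w \<ge> 0\<close> by (simp add: add_nonneg_pos)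
  also have "\<dots> = (norm (z + s *\<^sub>R w))\<^sup>2"
    unfolding power2_norm_eq_inner by (simp add: algebra_simps inner_commute power2_eq_square)
  finally have "norm z < norm (z + s *\<^sub>R w)"
    by (simp add: power_less_imp_less_base)
  with farthest[OF feasible] show False by simp
qed

lemma spanning_index_subset:
  fixes u :: "'i \<Rightarrow> 'a::euclidean_space"
  assumes "span (u ` A) = UNIV"
  obtains J where "J \<subseteq> A" "finite J" "card J = DIM('a)"
    "\<And>p. \<exists>a. p = (\<Sum>k\<in>J. a k *\<^sub>R u k)"
proof -
  obtain B where B: "B \<subseteq> u ` A" "independent B" "u ` A \<subseteq> span B"
    by (rule maximal_independent_subset)
  then have "span B = UNIV"
    using assms span_mono[of "u ` A" "span B"] by (auto simp: span_span)
  obtain J where J: "J \<subseteq> A" "inj_on u J" "B = u ` J"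
    using B(1) subset_image_inj by metis
  have "finite B" using B(2) by (rule finiteI_independent)
  then have "finite J" using J finite_image_iff by metis
  have "card J = DIM('a)"
    using dim_span_eq_card_independent[OF B(2)] \<open>span B = UNIV\<close> J card_image by fastforce
  have "\<exists>a. p = (\<Sum>k\<in>J. a k *\<^sub>R u k)" for p
  proof -
    obtain c where "p = (\<Sum>v\<in>B. c v *\<^sub>R v)"
      using span_finite[OF \<open>finite B\<close>] \<open>span B = UNIV\<close> by auto
    also have "\<dots> = (\<Sum>k\<in>J. c (u k) *\<^sub>R u k)"
      unfolding J(3) by (simp add: sum.reindex[OF J(2)])
    finally show ?thesis by (intro exI[where x = "\<lambda>k. c (u k)"])
  qed
  with J(1) \<open>finite J\<close> \<open>card J = DIM('a)\<close> show ?thesis using that by blast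
qed

lemma exists_abs_ge_inverse_card:
  fixes a :: "'i \<Rightarrow> real"
  assumes "finite J" "sum a J = 1"
  obtains j where "j \<in> J" "1 / real (card J) \<le> \<bar>a j\<bar>"
proof -
  have "\<exists>j\<in>J. 1 / real (card J) \<le> \<bar>a j\<bar>"
  proof (rule ccontr)
    assume "\<not> ?thesis"
    then have small: "\<And>k. k \<in> J \<Longrightarrow> \<bar>a k\<bar> < 1 / real (card J)" by auto
    have "J \<noteq> {}" using assms by auto
    have "1 \<le> (\<Sum>k\<in>J. \<bar>a k\<bar>)" using assms sum_abs[of a J] by simp
    also have "\<dots> < of_nat (card J) * (1 / real (card J))"
      using small \<open>J \<noteq> {}\<close> assms(1) by (intro sum_bounded_above_strict) auto
    finally show False using \<open>J \<noteq> {}\<close> assms(1) by simp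
  qed
  then show thesis using that by blast
qed

lemma norm_solve_combination_for:
  fixes u :: "'i \<Rightarrow> 'a::real_normed_vector"
  assumes "finite J" "j \<in> J" "a j \<noteq> 0"
  shows "norm (u j - (\<Sum>k\<in>J - {j}. (- a k / a j) *\<^sub>R u k))
           = norm (\<Sum>k\<in>J. a k *\<^sub>R u k) / \<bar>a j\<bar>"
proof -
  have "(\<Sum>k\<in>J. a k *\<^sub>R u k) = a j *\<^sub>R (u j - (\<Sum>k\<in>J - {j}. (- a k / a j) *\<^sub>R u k))"
    using assms by (simp add: sum.remove scaleR_sum_right scaleR_diff_right scaleR_add_right sum_negf)
  then show ?thesis using assms(3) by simp
qed

lemma rational_combination_approx:
  fixes v :: "'i \<Rightarrow> 'a::real_normed_vector"
  assumes K: "finite K" and b: "norm (y - (\<Sum>k\<in>K. b k *\<^sub>R v k)) < \<delta>"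
  obtains a where "a \<in> K \<rightarrow>\<^sub>E \<rat>" "norm (y - (\<Sum>k\<in>K. a k *\<^sub>R v k)) < \<delta>"
proof -
  define r where "r = norm (y - (\<Sum>k\<in>K. b k *\<^sub>R v k))"
  define \<epsilon> where "\<epsilon> = (\<delta> - r) / ((\<Sum>k\<in>K. norm (v k)) + 1)"
  have "(\<Sum>k\<in>K. norm (v k)) \<ge> 0" by (simp add: sum_nonneg)
  then have "\<epsilon> > 0" and \<epsilon>_le: "\<epsilon> * (\<Sum>k\<in>K. norm (v k)) < \<delta> - r"
    using b by (auto simp: \<epsilon>_def r_def field_simps)
  have "\<forall>k. \<exists>q\<in>\<rat>. b k - \<epsilon> < q \<and> q < b k + \<epsilon>"
    using \<open>\<epsilon> > 0\<close> by (intro allI Rats_dense_in_real) simp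
  then obtain q where q: "\<And>k. q k \<in> \<rat>" "\<And>k. \<bar>b k - q k\<bar> < \<epsilon>"
    by (metis abs_diff_less_iff abs_minus_commute)
  have "norm (y - (\<Sum>k\<in>K. q k *\<^sub>R v k))
      = norm ((y - (\<Sum>k\<in>K. b k *\<^sub>R v k)) + (\<Sum>k\<in>K. (b k - q k) *\<^sub>R v k))"
    by (simp add: scaleR_diff_left sum_subtractf)
  also have "\<dots> \<le> r + (\<Sum>k\<in>K. \<bar>b k - q k\<bar> * norm (v k))"
    unfolding r_def using norm_sum[of "\<lambda>k. (b k - q k) *\<^sub>R v k" K]
    by (intro order_trans[OF norm_triangle_ineq]) simp
  also have "(\<Sum>k\<in>K. \<bar>b k - q k\<bar> * norm (v k)) \<le> (\<Sum>k\<in>K. \<epsilon> * norm (v k))"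
    by (intro sum_mono mult_right_mono) (use q(2) in \<open>auto intro: less_imp_le\<close>)
  also have "r + \<dots> < \<delta>" using \<epsilon>_le by (simp add: sum_distrib_left)
  finally show ?thesis
    using that[of "restrict q K"] q(1) by simp
qed

lemma unit_vector_orthogonal_to_span:
  fixes x :: "'i \<Rightarrow> 'a::euclidean_space"
  assumes "finite K" "card K < DIM('a)"
  obtains n where "norm n = 1" "\<And>v. v \<in> span (x ` K) \<Longrightarrow> n \<bullet> v = 0"
proof -
  have "dim (x ` K) < DIM('a)"
    using dim_le_card'[of "x ` K"] card_image_le[of K x] assms by fastforce
  then obtain n0 where "n0 \<noteq> 0" "\<And>v. v \<in> span (x ` K) \<Longrightarrow> orthogonal n0 v"
    using orthogonal_to_subspace_exists by metis
  then show ?thesis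
    using that[of "n0 /\<^sub>R norm n0"] by (simp add: orthogonal_def)
qed

text \<open>Restricting to rational coefficients makes this a countable union, hence measurable.\<close>

definition near_span_event :: "nat \<Rightarrow> nat \<Rightarrow> real \<Rightarrow> (nat \<Rightarrow> 'a::euclidean_space) set" where
  "near_span_event i j \<delta> = (\<Union>a \<in> ({0..DIM('a)} - {i, j}) \<rightarrow>\<^sub>E \<rat>.
     {u \<in> {0..DIM('a)} \<rightarrow>\<^sub>E UNIV. norm (u j - (\<Sum>k\<in>{0..DIM('a)} - {i, j}. a k *\<^sub>R u k)) < \<delta>})"

lemma far_point_in_near_span_event:
  fixes u :: "nat \<Rightarrow> 'a::euclidean_space"
  assumes u: "u \<in> P_set" and x: "x \<in> T_poly u" "norm x > t" and t: "t > 0"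
  shows "\<exists>i\<in>{0..DIM('a)}. \<exists>j\<in>{0..DIM('a)}. i \<noteq> j \<and> u \<in> near_span_event i j (DIM('a) / t)"
proof -
  let ?I = "{0..DIM('a)}"
  have T_poly_iff: "y \<in> T_poly u \<longleftrightarrow> (\<forall>k\<in>?I. u k \<bullet> y \<le> 1)" for y
    by (auto simp: T_poly_def halfspace1_def inner_commute)
  have "T_poly u \<noteq> {}" using x by auto
  then obtain z where "z \<in> T_poly u" and farthest: "\<And>y. y \<in> T_poly u \<Longrightarrow> norm y \<le> norm z"
    using distance_attains_sup[OF compact_T_poly[OF u], of 0] by (auto simp: dist_0_norm)
  have "norm z > t" using farthest[OF x(1)] x(2) by simp
  let ?A = "{k\<in>?I. u k \<bullet> z = 1}"
  have "span (u ` ?A) = UNIV"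
    using \<open>z \<in> T_poly u\<close> farthest
    by (intro farthest_point_active_normals_span) (auto simp: T_poly_iff)
  then obtain J where J: "J \<subseteq> ?A" "finite J" "card J = DIM('a)"
    and combination: "\<And>p. \<exists>a. p = (\<Sum>k\<in>J. a k *\<^sub>R u k)"
    by (rule spanning_index_subset) blast
  have "\<not> ?I \<subseteq> J"
  proof
    assume "?I \<subseteq> J"
    then have "card ?I \<le> card J" by (rule card_mono[OF J(2)])
    then show False using J(3) by simp
  qed
  then obtain i where i: "i \<in> ?I" "i \<notin> J" by blast
  have "J \<subseteq> ?I - {i}" using J(1) i(2) by auto
  then have J_eq: "J = ?I - {i}"
    by (rule card_subset_eq[rotated]) (use J(3) i(1) in simp_all)
  \<comment> \<open>\<open>p\<close> lies on every active hyperplane, so its coefficients in the basis of active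
    normals sum to \<open>1\<close>\<close>
  define p where "p = (1 / (norm z)\<^sup>2) *\<^sub>R z"
  obtain a where p: "p = (\<Sum>k\<in>J. a k *\<^sub>R u k)" using combination by blast
  have "z \<noteq> 0" using \<open>norm z > t\<close> t by auto
  have "1 = p \<bullet> z" using \<open>z \<noteq> 0\<close> by (simp add: p_def dot_square_norm)
  also have "\<dots> = (\<Sum>k\<in>J. a k * (u k \<bullet> z))" by (simp add: p inner_sum_left)
  also have "\<dots> = sum a J" using J(1) by (intro sum.cong) auto
  finally have "sum a J = 1" ..
  then obtain j where j: "j \<in> J" "1 / real (card J) \<le> \<bar>a j\<bar>"
    by (rule exists_abs_ge_inverse_card[OF J(2)])
  then have "a j \<noteq> 0" using J(3) by auto
  have K_eq: "J - {j} = ?I - {i, j}" using J_eq by auto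
  have "norm (u j - (\<Sum>k\<in>J - {j}. (- a k / a j) *\<^sub>R u k)) = norm p / \<bar>a j\<bar>"
    using norm_solve_combination_for[where a = a and u = u, OF J(2) j(1) \<open>a j \<noteq> 0\<close>] by (simp add: p)
  also have "\<dots> = (1 / \<bar>a j\<bar>) / norm z"
    using \<open>z \<noteq> 0\<close> by (simp add: p_def power2_eq_square)
  also have "\<dots> \<le> real DIM('a) / norm z"
    using j J(3) \<open>a j \<noteq> 0\<close> by (intro divide_right_mono) (simp_all add: divide_simps mult.commute)
  also have "\<dots> < real DIM('a) / t"
    using \<open>norm z > t\<close> t by (simp add: frac_less2)
  finally obtain b where b: "b \<in> (?I - {i, j}) \<rightarrow>\<^sub>E \<rat>"
    "norm (u j - (\<Sum>k\<in>?I - {i, j}. b k *\<^sub>R u k)) < real DIM('a) / t"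
    unfolding K_eq by (rule rational_combination_approx[rotated]) auto
  moreover have "u \<in> ?I \<rightarrow>\<^sub>E UNIV" using u by (simp add: P_set_def PiE_def Pi_def)
  ultimately have event: "u \<in> near_span_event i j (DIM('a) / t)"
    unfolding near_span_event_def by blast
  moreover have "j \<in> ?I" "i \<noteq> j" using i j J(1) by auto
  ultimately show ?thesis using i(1) by blast
qed

lemma near_span_event_sets:
  fixes M :: "'a::euclidean_space measure"
  assumes M: "sets M = sets borel" and j: "j \<in> {0..DIM('a)}"
  shows "near_span_event i j \<delta> \<in> sets (PiM {0..DIM('a)} (\<lambda>_. M))"
proof -
  let ?I = "{0..DIM('a)}" and ?K = "{0..DIM('a)} - {i, j}"
  have space: "space (PiM ?I (\<lambda>_. M)) = ?I \<rightarrow>\<^sub>E UNIV"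
    using sets_eq_imp_space_eq[OF M] by (simp add: space_PiM)
  have component [measurable]: "(\<lambda>u. u k) \<in> borel_measurable (PiM ?I (\<lambda>_. M))" if "k \<in> ?I" for k
    using measurable_component_singleton[OF that, of "\<lambda>_. M"] by (simp add: measurable_cong_sets[OF refl M])
  have "{u \<in> space (PiM ?I (\<lambda>_. M)). norm (u j - (\<Sum>k\<in>?K. a k *\<^sub>R u k)) < \<delta>}
      \<in> sets (PiM ?I (\<lambda>_. M))" for a
  proof -
    have "(\<lambda>u. \<Sum>k\<in>?K. a k *\<^sub>R u k) \<in> borel_measurable (PiM ?I (\<lambda>_. M))"
      by (intro borel_measurable_sum borel_measurable_scaleR) auto
    with j show ?thesis by measurable
  qed
  then show ?thesis
    unfolding near_span_event_def space[symmetric]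
    by (intro sets.countable_UN' countable_PiE) (auto simp: countable_rat)
qed

lemma emeasure_near_span_event_le:
  fixes M :: "'a::euclidean_space measure"
  assumes M: "prob_space M" "sets M = sets borel"
    and slab: "\<And>n. norm n = 1 \<Longrightarrow> emeasure M {y. \<bar>y \<bullet> n\<bar> < \<delta>} \<le> c"
    and ij: "i \<in> {0..DIM('a)}" "j \<in> {0..DIM('a)}" "i \<noteq> j"
  shows "emeasure (PiM {0..DIM('a)} (\<lambda>_. M)) (near_span_event i j \<delta>) \<le> c"
proof -
  let ?I = "{0..DIM('a)}" and ?K = "{0..DIM('a)} - {i, j}"
  let ?J = "?I - {j}" and ?D = "near_span_event i j \<delta> :: (nat \<Rightarrow> 'a) set"
  interpret product_prob_space "\<lambda>_::nat. M" ?J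
    using M(1) by (simp add: product_prob_space_def product_prob_space_axioms_def
        product_sigma_finite_def prob_space_imp_sigma_finite)
  have D_sets: "?D \<in> sets (PiM ?I (\<lambda>_. M))" by (rule near_span_event_sets[OF M(2) ij(2)])
  have I_eq: "?I = insert j ?J" using ij by auto
  \<comment> \<open>Fubini in the coordinate \<open>j\<close>: the \<open>d - 1\<close> vectors \<open>x k\<close>, \<open>k \<in> K\<close>, lie in a hyperplane,
    and \<open>y\<close> has to lie in the slab of width \<open>\<delta>\<close> around it\<close>
  have fibre_le: "(\<integral>\<^sup>+ y. indicator ?D (x(j := y)) \<partial>M) \<le> c" for x
  proof -
    have "card ?K < DIM('a)" using ij by (simp add: card_Diff_subset)
    then obtain n where n: "norm n = 1" and n_orth: "\<And>v. v \<in> span (x ` ?K) \<Longrightarrow> n \<bullet> v = 0"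
      using unit_vector_orthogonal_to_span[of ?K] by auto
    have "indicator ?D (x(j := y)) \<le> (indicator {y. \<bar>y \<bullet> n\<bar> < \<delta>} y :: ennreal)" for y
    proof (cases "x(j := y) \<in> ?D")
      case True
      then obtain a where "norm ((x(j := y)) j - (\<Sum>k\<in>?K. a k *\<^sub>R (x(j := y)) k)) < \<delta>"
        by (auto simp: near_span_event_def)
      moreover have "(\<Sum>k\<in>?K. a k *\<^sub>R (x(j := y)) k) = (\<Sum>k\<in>?K. a k *\<^sub>R x k)"
        by (intro sum.cong) auto
      ultimately have "norm (y - (\<Sum>k\<in>?K. a k *\<^sub>R x k)) < \<delta>" by simp
      moreover have "(\<Sum>k\<in>?K. a k *\<^sub>R x k) \<in> span (x ` ?K)"
        by (intro span_sum span_scale span_base) auto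
      then have "(\<Sum>k\<in>?K. a k *\<^sub>R x k) \<bullet> n = 0"
        using n_orth inner_commute by metis
      then have "\<bar>y \<bullet> n\<bar> = \<bar>(y - (\<Sum>k\<in>?K. a k *\<^sub>R x k)) \<bullet> n\<bar>"
        by (simp add: inner_diff_left)
      moreover have "\<dots> \<le> norm (y - (\<Sum>k\<in>?K. a k *\<^sub>R x k))"
        using Cauchy_Schwarz_ineq2[of _ n] n by simp
      ultimately show ?thesis using True by simp
    qed simp
    then have "(\<integral>\<^sup>+ y. indicator ?D (x(j := y)) \<partial>M) \<le> (\<integral>\<^sup>+ y. indicator {y. \<bar>y \<bullet> n\<bar> < \<delta>} y \<partial>M)"
      by (rule nn_integral_mono)
    also have "{y. \<bar>y \<bullet> n\<bar> < \<delta>} \<in> sets M" unfolding M(2) by measurable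
    then have "(\<integral>\<^sup>+ y. indicator {y. \<bar>y \<bullet> n\<bar> < \<delta>} y \<partial>M) = emeasure M {y. \<bar>y \<bullet> n\<bar> < \<delta>}"
      by (rule nn_integral_indicator)
    also have "\<dots> \<le> c" by (rule slab[OF n])
    finally show ?thesis .
  qed
  have "emeasure (PiM ?I (\<lambda>_. M)) ?D = (\<integral>\<^sup>+ u. indicator ?D u \<partial>PiM ?I (\<lambda>_. M))"
    using D_sets by simp
  also have "\<dots> = (\<integral>\<^sup>+ x. (\<integral>\<^sup>+ y. indicator ?D (x(j := y)) \<partial>M) \<partial>PiM ?J (\<lambda>_. M))"
    using D_sets ij(2) by (subst I_eq, subst product_nn_integral_insert) (auto simp: insert_absorb)
  also have "\<dots> \<le> (\<integral>\<^sup>+ x. c \<partial>PiM ?J (\<lambda>_. M))"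
    by (intro nn_integral_mono fibre_le)
  also have "\<dots> = c" by (simp add: emeasure_space_1)
  finally show ?thesis .
qed

lemma inner_le_of_norm_le:
  assumes "norm x \<le> R"
  shows "x \<bullet> w \<le> R * norm w"
proof -
  have "x \<bullet> w \<le> norm x * norm w" by (rule norm_cauchy_schwarz)
  also have "\<dots> \<le> R * norm w" using assms by (rule mult_right_mono) simp
  finally show ?thesis .
qed

lemma supp_fun_nonneg:
  assumes "bounded K" "0 \<in> K"
  shows "0 \<le> supp_fun K w"
proof -
  obtain R where R: "\<And>x. x \<in> K \<Longrightarrow> norm x \<le> R" using assms(1) bounded_iff by blast
  have "bdd_above ((\<lambda>x. x \<bullet> w) ` K)"
  proof (rule bdd_aboveI2)
    show "x \<bullet> w \<le> R * norm w" if "x \<in> K" for x by (rule inner_le_of_norm_le[OF R[OF that]])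
  qed
  moreover have "0 \<in> (\<lambda>x. x \<bullet> w) ` K" using assms(2) by force
  ultimately show ?thesis
    unfolding supp_fun_def by (rule cSup_upper[rotated])
qed

lemma supp_fun_le_norm:
  assumes "K \<noteq> {}" "\<And>x. x \<in> K \<Longrightarrow> norm x \<le> t"
  shows "supp_fun K w \<le> t * norm w"
  unfolding supp_fun_def
  using assms by (intro cSup_least) (auto intro: inner_le_of_norm_le)

lemma Phi_fun_nonneg:
  assumes "bounded K" "0 \<in> K"
  shows "0 \<le> Phi_fun \<phi> K"
  unfolding Phi_fun_def by (intro Bochner_Integration.integral_nonneg supp_fun_nonneg assms)

lemma Phi_fun_le_radius:
  assumes \<phi>: "prob_space \<phi>" "AE w in \<phi>. norm w \<le> 1"
    and K: "K \<noteq> {}" "\<And>x. x \<in> K \<Longrightarrow> norm x \<le> t" and t: "0 \<le> t"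
  shows "Phi_fun \<phi> K \<le> t"
proof (cases "integrable \<phi> (supp_fun K)")
  case True
  interpret prob_space \<phi> by (rule \<phi>(1))
  have "AE w in \<phi>. supp_fun K w \<le> t"
    using \<phi>(2)
  proof (rule eventually_mono)
    fix w :: 'a assume "norm w \<le> 1"
    then have "t * norm w \<le> t" using t mult_left_mono[of "norm w" 1 t] by simp
    then show "supp_fun K w \<le> t"
      using supp_fun_le_norm[OF K, of w] by linarith
  qed
  then have "(\<integral>w. supp_fun K w \<partial>\<phi>) \<le> (\<integral>w. t \<partial>\<phi>)"
    using True by (intro integral_mono_AE) auto
  then show ?thesis by (simp add: Phi_fun_def prob_space)
next
  case False
  then show ?thesis using t by (simp add: Phi_fun_def not_integrable_integral_eq)
qed

lemma dyadic_interval_exists: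
  fixes x :: real
  assumes "x > 2"
  obtains k :: nat where "k \<ge> 1" "2 ^ k < x" "x \<le> 2 ^ (k + 1)"
proof -
  have ex: "\<exists>n::nat. x \<le> 2 ^ n"
    using real_arch_pow[of 2 x] by (auto intro: less_imp_le)
  define n where "n = (LEAST n::nat. x \<le> 2 ^ n)"
  have n: "x \<le> 2 ^ n" unfolding n_def by (rule LeastI_ex[OF ex])
  have "n \<ge> 2"
  proof (rule ccontr)
    assume "\<not> n \<ge> 2"
    then have "n = 0 \<or> n = 1" by auto
    then show False using n assms by auto
  qed
  moreover have "\<not> x \<le> 2 ^ (n - 1)"
    unfolding n_def by (rule not_less_Least) (use \<open>n \<ge> 2\<close> in \<open>simp add: n_def[symmetric]\<close>)
  ultimately show ?thesis
    using that[of "n - 1"] n by simp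
qed

lemma disjoint_family_dyadic_intervals:
  "disjoint_family (\<lambda>k::nat. {(2::real) ^ (k + 1)..<2 ^ (k + 2)})"
proof -
  have "{(2::real) ^ (k + 1)..<2 ^ (k + 2)} \<inter> {2 ^ (l + 1)..<2 ^ (l + 2)} = {}" if "k < l" for k l
  proof -
    have "(2::real) ^ (k + 2) \<le> 2 ^ (l + 1)" using that by (intro power_increasing) auto
    then show ?thesis by auto
  qed
  then show ?thesis
    unfolding disjoint_family_on_def by (metis Int_commute linorder_neqE_nat)
qed

lemma suminf_dyadic_le_nn_integral:
  fixes f :: "real \<Rightarrow> real"
  assumes mono: "mono_on {0..} f" and nonneg: "\<And>t. 0 \<le> t \<Longrightarrow> 0 \<le> f t"
  shows "(\<Sum>k. ennreal (f (2 ^ (k + 1)) / 2 ^ (k + 3)))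
           \<le> (\<integral>\<^sup>+ t \<in> {1..}. ennreal (f t / t\<^sup>2) \<partial>lborel)"
proof -
  define I where "I k = {(2::real) ^ (k + 1)..<2 ^ (k + 2)}" for k :: nat
  define c where "c k = f (2 ^ (k + 1)) / 2 ^ (2 * k + 4)" for k :: nat
  have c_nonneg: "0 \<le> c k" for k using nonneg by (simp add: c_def)
  have c_le: "c k \<le> f t / t\<^sup>2" if "t \<in> I k" for k t
  proof -
    have t: "2 ^ (k + 1) \<le> t" "t < 2 ^ (k + 2)" "0 < t"
      using that by (auto simp: I_def intro: less_le_trans[of 0 "2 ^ (k + 1)"])
    have "t\<^sup>2 \<le> (2 ^ (k + 2))\<^sup>2" using t by (intro power_mono) auto
    also have "\<dots> = 2 ^ ((k + 2) * 2)" by (rule power_mult[symmetric])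
    also have "(k + 2) * 2 = 2 * k + 4" by simp
    finally have "t\<^sup>2 \<le> 2 ^ (2 * k + 4)" .
    moreover have "f (2 ^ (k + 1)) \<le> f t" using t by (intro mono_onD[OF mono]) auto
    ultimately show ?thesis
      unfolding c_def using nonneg t by (intro frac_le) auto
  qed
  have "ennreal (f (2 ^ (k + 1)) / 2 ^ (k + 3)) = (\<integral>\<^sup>+ t. ennreal (c k) * indicator (I k) t \<partial>lborel)"
    for k
  proof -
    have "(2::real) ^ (2 * k + 4) = 2 ^ (k + 1) * 2 ^ (k + 3)"
      unfolding power_add[symmetric] by (rule arg_cong[where f = "\<lambda>n. (2::real) ^ n"]) simp
    moreover have "(2::real) ^ (k + 2) - 2 ^ (k + 1) = 2 ^ (k + 1)" by simp
    ultimately have "c k * (2 ^ (k + 2) - 2 ^ (k + 1)) = f (2 ^ (k + 1)) / 2 ^ (k + 3)"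
      by (simp add: c_def)
    then show ?thesis
      using c_nonneg by (simp add: I_def nn_integral_cmult_indicator ennreal_mult[symmetric])
  qed
  then have "(\<Sum>k. ennreal (f (2 ^ (k + 1)) / 2 ^ (k + 3)))
      = (\<integral>\<^sup>+ t. (\<Sum>k. ennreal (c k) * indicator (I k) t) \<partial>lborel)"
    by (simp add: nn_integral_suminf I_def)
  also have "\<dots> \<le> (\<integral>\<^sup>+ t \<in> {1..}. ennreal (f t / t\<^sup>2) \<partial>lborel)"
  proof (intro nn_integral_mono)
    fix t :: real
    show "(\<Sum>k. ennreal (c k) * indicator (I k) t) \<le> ennreal (f t / t\<^sup>2) * indicator {1..} t"
    proof (cases "\<exists>k. t \<in> I k")
      case True
      then obtain k where k: "t \<in> I k" by blast
      have "1 \<le> t"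
        using k one_le_power[of "2::real" "k + 1"] by (auto simp: I_def)
      have "disjoint_family I"
        unfolding I_def by (rule disjoint_family_dyadic_intervals)
      then have "(\<Sum>k. ennreal (c k) * indicator (I k) t) = ennreal (c k)"
        using k by (rule suminf_cmult_indicator)
      then show ?thesis
        using \<open>1 \<le> t\<close> c_le[OF k] by (simp add: ennreal_leI)
    qed simp
  qed
  finally show ?thesis .
qed

lemma nn_integral_dyadic_cover_le:
  fixes f :: "real \<Rightarrow> real" and X :: "'b \<Rightarrow> real"
  assumes mono: "mono_on {0..} f" and nonneg: "\<And>t. 0 \<le> t \<Longrightarrow> 0 \<le> f t"
    and E: "\<And>k. E k \<in> sets M" "\<And>k. emeasure M (E k) \<le> ennreal (C / 2 ^ k)" and C: "0 \<le> C"
    and cover: "\<And>u. u \<in> S \<Longrightarrow> 0 \<le> X u \<and> (\<exists>k. X u \<le> 2 ^ (k + 1) \<and> u \<in> E k)"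
  shows "(\<integral>\<^sup>+ u \<in> S. ennreal (f (X u)) \<partial>M)
           \<le> ennreal (8 * C) * (\<integral>\<^sup>+ t \<in> {1..}. ennreal (f t / t\<^sup>2) \<partial>lborel)"
proof -
  have pointwise: "ennreal (f (X u)) * indicator S u \<le> (\<Sum>k. ennreal (f (2 ^ (k + 1))) * indicator (E k) u)"
    for u
  proof (cases "u \<in> S")
    case True
    then obtain k where k: "0 \<le> X u" "X u \<le> 2 ^ (k + 1)" "u \<in> E k" using cover by blast
    then have "ennreal (f (X u)) * indicator S u \<le> ennreal (f (2 ^ (k + 1))) * indicator (E k) u"
      using True by (simp add: ennreal_leI mono_onD[OF mono])
    also have "\<dots> = (\<Sum>n\<in>{k}. ennreal (f (2 ^ (n + 1))) * indicator (E n) u)"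
      by (simp only: sum.insert finite.emptyI empty_iff not_False_eq_True sum.empty add_0_right)
    also have "\<dots> \<le> (\<Sum>n. ennreal (f (2 ^ (n + 1))) * indicator (E n) u)"
      by (rule sum_le_suminf) (auto intro: summableI)
    finally show ?thesis .
  qed simp
  have "(\<integral>\<^sup>+ u \<in> S. ennreal (f (X u)) \<partial>M)
      \<le> (\<integral>\<^sup>+ u. (\<Sum>k. ennreal (f (2 ^ (k + 1))) * indicator (E k) u) \<partial>M)"
    by (intro nn_integral_mono pointwise)
  also have "\<dots> = (\<Sum>k. ennreal (f (2 ^ (k + 1))) * emeasure M (E k))"
    using E(1) by (simp add: nn_integral_suminf nn_integral_cmult_indicator)
  also have "\<dots> \<le> (\<Sum>k. ennreal (8 * C) * ennreal (f (2 ^ (k + 1)) / 2 ^ (k + 3)))"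
  proof (intro suminf_le allI)
    fix k :: nat
    have "ennreal (f (2 ^ (k + 1))) * emeasure M (E k) \<le> ennreal (f (2 ^ (k + 1))) * ennreal (C / 2 ^ k)"
      by (intro mult_left_mono E(2)) simp
    also have "\<dots> = ennreal (8 * C) * ennreal (f (2 ^ (k + 1)) / 2 ^ (k + 3))"
      using nonneg[of "2 ^ (k + 1)"] C by (simp add: ennreal_mult[symmetric] field_simps power_add)
    finally show "ennreal (f (2 ^ (k + 1))) * emeasure M (E k)
        \<le> ennreal (8 * C) * ennreal (f (2 ^ (k + 1)) / 2 ^ (k + 3))" .
  qed auto
  also have "\<dots> = ennreal (8 * C) * (\<Sum>k. ennreal (f (2 ^ (k + 1)) / 2 ^ (k + 3)))"
    by (rule ennreal_suminf_cmult)
  also have "\<dots> \<le> ennreal (8 * C) * (\<integral>\<^sup>+ t \<in> {1..}. ennreal (f t / t\<^sup>2) \<partial>lborel)"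
    by (intro mult_left_mono suminf_dyadic_le_nn_integral[OF mono nonneg]) auto
  finally show ?thesis .
qed

text \<open>The event for \<open>k = 0\<close> is the whole space; it accounts for the tuples with \<open>\<Phi> \<le> 2\<close>.\<close>

definition near_span_events :: "nat \<Rightarrow> (nat \<Rightarrow> 'a::euclidean_space) set" where
  "near_span_events k = (if k = 0 then {0..DIM('a)} \<rightarrow>\<^sub>E UNIV
     else (\<Union>(i, j) \<in> {(i, j) \<in> {0..DIM('a)} \<times> {0..DIM('a)}. i \<noteq> j}.
             near_span_event i j (DIM('a) / 2 ^ k)))"

lemma near_span_events_sets:
  fixes M :: "'a::euclidean_space measure"
  assumes M: "sets M = sets borel"
  shows "near_span_events k \<in> sets (PiM {0..DIM('a)} (\<lambda>_. M))"
proof -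
  let ?I = "{0..DIM('a)}"
  have space: "space (PiM ?I (\<lambda>_. M)) = ?I \<rightarrow>\<^sub>E UNIV"
    using sets_eq_imp_space_eq[OF M] by (simp add: space_PiM)
  have "finite {(i, j) \<in> ?I \<times> ?I. i \<noteq> j}" by (rule finite_subset[of _ "?I \<times> ?I"]) auto
  then show ?thesis
    unfolding near_span_events_def space[symmetric] using near_span_event_sets[OF M] by auto
qed

lemma emeasure_near_span_events_le:
  fixes M :: "'a::euclidean_space measure"
  assumes M: "prob_space M" "sets M = sets borel" and c: "0 \<le> c"
    and slab: "\<And>n \<delta>. norm n = 1 \<Longrightarrow> \<delta> > 0 \<Longrightarrow> emeasure M {y. \<bar>y \<bullet> n\<bar> < \<delta>} \<le> ennreal (c * \<delta>)"
  shows "emeasure (PiM {0..DIM('a)} (\<lambda>_. M)) (near_span_events k)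
           \<le> ennreal ((1 + real ((DIM('a) + 1)\<^sup>2) * c * DIM('a)) / 2 ^ k)"
proof (cases "k = 0")
  case True
  interpret product_prob_space "\<lambda>_::nat. M" "{0..DIM('a)}"
    using M(1) by (simp add: product_prob_space_def product_prob_space_axioms_def
        product_sigma_finite_def prob_space_imp_sigma_finite)
  have "space (PiM {0..DIM('a)} (\<lambda>_. M)) = {0..DIM('a)} \<rightarrow>\<^sub>E UNIV"
    using sets_eq_imp_space_eq[OF M(2)] by (simp add: space_PiM)
  then show ?thesis
    using True c emeasure_space_1 by (simp add: near_span_events_def del: space_PiM)
next
  case False
  let ?I = "{0..DIM('a)}" and ?\<delta> = "DIM('a) / 2 ^ k"
  let ?PR = "{(i, j) \<in> ?I \<times> ?I. i \<noteq> j}" and ?Pi = "PiM ?I (\<lambda>_. M)"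
  have "finite ?PR" by (rule finite_subset[of _ "?I \<times> ?I"]) auto
  have "card ?PR \<le> card (?I \<times> ?I)" by (intro card_mono) auto
  also have "\<dots> = (DIM('a) + 1)\<^sup>2" by (simp add: card_cartesian_product power2_eq_square)
  finally have card_PR: "card ?PR \<le> (DIM('a) + 1)\<^sup>2" .
  have "emeasure ?Pi (near_span_events k)
      \<le> (\<Sum>p \<in> ?PR. emeasure ?Pi (near_span_event (fst p) (snd p) ?\<delta>))"
    unfolding near_span_events_def using False \<open>finite ?PR\<close> near_span_event_sets[OF M(2)]
    by (simp add: case_prod_unfold emeasure_subadditive_finite image_subset_iff)
  also have "\<dots> \<le> (\<Sum>p \<in> ?PR. ennreal (c * ?\<delta>))"
  proof (rule sum_mono)
    fix p assume "p \<in> ?PR"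
    moreover have "emeasure M {y. \<bar>y \<bullet> n\<bar> < ?\<delta>} \<le> ennreal (c * ?\<delta>)" if "norm n = 1" for n
      by (rule slab[OF that]) simp
    ultimately show "emeasure ?Pi (near_span_event (fst p) (snd p) ?\<delta>) \<le> ennreal (c * ?\<delta>)"
      by (intro emeasure_near_span_event_le[OF M]) auto
  qed
  also have "\<dots> = ennreal (real (card ?PR) * c * DIM('a) / 2 ^ k)"
    using c by (simp add: ennreal_of_nat_eq_real_of_nat ennreal_mult'[symmetric])
  also have "\<dots> \<le> ennreal ((1 + real ((DIM('a) + 1)\<^sup>2) * c * DIM('a)) / 2 ^ k)"
  proof -
    have "real (card ?PR) * c * DIM('a) \<le> real ((DIM('a) + 1)\<^sup>2) * c * DIM('a)"
      by (intro mult_right_mono of_nat_mono card_PR c) simp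
    then show ?thesis by (intro ennreal_leI divide_right_mono) auto
  qed
  finally show ?thesis .
qed

lemma near_span_events_cover:
  fixes \<phi> :: "'a::euclidean_space measure"
  assumes \<phi>: "prob_space \<phi>" "AE w in \<phi>. norm w \<le> 1" and u: "u \<in> P_set"
  shows "\<exists>k. Phi_fun \<phi> (T_poly u) \<le> 2 ^ (k + 1) \<and> u \<in> near_span_events k"
proof (cases "Phi_fun \<phi> (T_poly u) \<le> 2")
  case True
  then show ?thesis
    using u by (intro exI[of _ 0]) (auto simp: near_span_events_def P_set_def)
next
  case False
  then have "2 < Phi_fun \<phi> (T_poly u)" by simp
  then obtain k :: nat where k: "k \<ge> 1" "2 ^ k < Phi_fun \<phi> (T_poly u)" "Phi_fun \<phi> (T_poly u) \<le> 2 ^ (k + 1)"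
    by (rule dyadic_interval_exists)
  have "\<not> (\<forall>x\<in>T_poly u. norm x \<le> 2 ^ k)"
  proof
    assume "\<forall>x\<in>T_poly u. norm x \<le> 2 ^ k"
    then have "Phi_fun \<phi> (T_poly u) \<le> 2 ^ k"
      by (intro Phi_fun_le_radius[OF \<phi>]) (use zero_in_T_poly in auto)
    then show False using k(2) by simp
  qed
  then obtain x where "x \<in> T_poly u" "norm x > 2 ^ k" by (auto simp: not_le)
  then obtain i j where "i \<in> {0..DIM('a)}" "j \<in> {0..DIM('a)}" "i \<noteq> j"
    "u \<in> near_span_event i j (DIM('a) / 2 ^ k)"
    using far_point_in_near_span_event[OF u, of x "2 ^ k"] by auto
  then have "u \<in> near_span_events k"
    using k(1) unfolding near_span_events_def by auto
  then show ?thesis using k(3) by blast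
qed

theorem lemma4p2:
  fixes \<phi> :: "'a::euclidean_space measure"
  assumes dim: "DIM('a) \<ge> 2"
    and prob: "prob_space \<phi>"
    and even: "distr \<phi> borel uminus = \<phi>"
    and nondeg: "\<forall>v. v \<noteq> 0 \<longrightarrow> \<not> measure_support \<phi> \<subseteq> great_subsphere v"
    and dens: "\<exists>g B. g \<in> borel_measurable borel \<and> (\<forall>x. 0 \<le> g x \<and> g x \<le> B)
                 \<and> \<phi> = density sphere_lebesgue (\<lambda>x. ennreal (g x))"
  shows "\<exists>C::real. \<forall>f::real \<Rightarrow> real.
           mono_on {0..} f \<longrightarrow> (\<forall>t\<ge>0. 0 \<le> f t) \<longrightarrow>
           (\<integral>\<^sup>+ u \<in> P_set. ennreal (f (Phi_fun \<phi> (T_poly u))) \<partial>(PiM {0..DIM('a)} (\<lambda>_. \<phi>)))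
             \<le> ennreal C * (\<integral>\<^sup>+ t \<in> {1..}. ennreal (f t / t\<^sup>2) \<partial>lborel)"
proof -
  obtain g B where g: "g \<in> borel_measurable borel" "\<And>x. 0 \<le> g x" "\<And>x. g x \<le> B"
    and \<phi>: "\<phi> = density sphere_lebesgue (\<lambda>x. ennreal (g x))"
    using dens by blast
  define c where "c = 6 * B * real DIM('a) * measure lborel (ball (0::'a) 2)"
  have "0 \<le> B" using g(2,3) order_trans by blast
  then have "0 \<le> c" by (simp add: c_def)
  have sets: "sets \<phi> = sets borel" by (simp add: \<phi>)
  have AE: "AE w in \<phi>. norm w \<le> 1"
    unfolding \<phi> by (rule AE_density_sphere_lebesgue_norm_le_1) (use g(1) in measurable)
  have "emeasure \<phi> {y. \<bar>y \<bullet> n\<bar> < \<delta>} \<le> ennreal (c * \<delta>)" if "norm n = 1" "\<delta> > 0" for n \<delta>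
    unfolding \<phi> c_def by (rule emeasure_bounded_density_slab_le[OF g that])
  note events = near_span_events_sets[OF sets] emeasure_near_span_events_le[OF prob sets \<open>0 \<le> c\<close> this]
  have "(\<integral>\<^sup>+ u \<in> P_set. ennreal (f (Phi_fun \<phi> (T_poly u))) \<partial>(PiM {0..DIM('a)} (\<lambda>_. \<phi>)))
          \<le> ennreal (8 * (1 + real ((DIM('a) + 1)\<^sup>2) * c * DIM('a)))
            * (\<integral>\<^sup>+ t \<in> {1..}. ennreal (f t / t\<^sup>2) \<partial>lborel)"
    if "mono_on {0..} f" "\<forall>t\<ge>0. 0 \<le> f t" for f
  proof (rule nn_integral_dyadic_cover_le[OF that(1) _ events])
    show "0 \<le> 1 + real ((DIM('a) + 1)\<^sup>2) * c * DIM('a)" using \<open>0 \<le> c\<close> by simp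
    show "0 \<le> Phi_fun \<phi> (T_poly u) \<and> (\<exists>k. Phi_fun \<phi> (T_poly u) \<le> 2 ^ (k + 1) \<and> u \<in> near_span_events k)"
      if "u \<in> P_set" for u
      using Phi_fun_nonneg[OF bounded_T_poly[OF that] zero_in_T_poly] near_span_events_cover[OF prob AE that]
      by blast
  qed (use that(2) in auto)
  then show ?thesis by blast
qed

end
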